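(* For every $m\ge2$, the weight-$m$ part of the first Lie algebra homology of $\Lambda_1(\mathbb{Q}\mathrm{Tree}_2)$ is nonzero: $H_1(\Lambda_1(\mathbb{Q}\mathrm{Tree}_2))_{(m)}\neq0$. Equivalently, $\mathbb{Q}\mathrm{Tree}_2((m+1))$ is not contained in the derived subalgebra $[\Lambda_1(\mathbb{Q}\mathrm{Tree}_2),\Lambda_1(\mathbb{Q}\mathrm{Tree}_2)]$.
   Context: $\mathrm{Tree}_2((m))$, $m\ge1$, is the set of planar binary rooted trees with one root and $m$ leaves labeled $1,\dots,m$ from left to right (each internal vertex has exactly two inputs), equivalently full parenthesizations of $12\cdots m$; $\mathrm{Tree}_2((1))=\{1\}$. Composition $S\circ_iT$ grafts the root of $T$ onto the $i$-th leaf of $S$. Let $\Lambda_1(\mathbb{Q}\mathrm{Tree}_2)=\bigoplus_{m\ge2}\mathbb{Q}\mathrm{Tree}_2((m))$ with Lie bracket $[c,d]=\sum_{t=1}^{j}d\circ_tc-\sum_{s=1}^{k}c\circ_sd$ for $c\in\mathrm{Tree}_2((k))$, $d\in\mathrm{Tree}_2((j))$, extended bilinearly. Give $\mathbb{Q}\mathrm{Tree}_2((m))$ weight $m-1$ (the eigenvalue of the adjoint action of the unit tree); the Chevalley–Eilenberg chain complex decomposes by total weight, and $H_1(\cdot)_{(m)}$ denotes the weight-$m$ part of $H_1$, i.e. of the abelianization $\Lambda_1/[\Lambda_1,\Lambda_1]$. *)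

theory Defs
  imports Complex_Main "HOL-Library.Function_Algebras"
begin

text \<open>Planar binary rooted trees; leaves are numbered 1..m from left to right.
  Tree_2((1)) = {BLeaf}.\<close>
datatype btree = BLeaf | BNode btree btree

fun leaves :: "btree \<Rightarrow> nat" where
  "leaves BLeaf = 1"
| "leaves (BNode l r) = leaves l + leaves r"

text \<open>graft S i T = S \<circ>_i T : graft the root of T onto the i-th leaf of S (1 \<le> i \<le> leaves S).\<close>
fun graft :: "btree \<Rightarrow> nat \<Rightarrow> btree \<Rightarrow> btree" where
  "graft BLeaf i T = (if i = 1 then T else BLeaf)"
| "graft (BNode l r) i T =
     (if i \<le> leaves l then BNode (graft l i T) r
      else BNode l (graft r (i - leaves l) T))"

text \<open>Vectors of the free Q-vector space on trees: finitely supported functions.\<close>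
type_synonym vec = "btree \<Rightarrow> rat"

definition vscale :: "rat \<Rightarrow> vec \<Rightarrow> vec" where
  "vscale r f = (\<lambda>t. r * f t)"

definition supp :: "vec \<Rightarrow> btree set" where
  "supp f = {t. f t \<noteq> 0}"

definition bas :: "btree \<Rightarrow> vec" where
  "bas T = (\<lambda>s. if s = T then 1 else 0)"

definition QTree :: "nat \<Rightarrow> vec set" where
  "QTree m = {f. finite (supp f) \<and> (\<forall>t\<in>supp f. leaves t = m)}"

definition Lambda1 :: "vec set" where
  "Lambda1 = {f. finite (supp f) \<and> (\<forall>t\<in>supp f. 2 \<le> leaves t)}"

definition br_basis :: "btree \<Rightarrow> btree \<Rightarrow> vec" where
  "br_basis c d = (\<Sum>t\<in>{1..leaves d}. bas (graft d t c)) - (\<Sum>s\<in>{1..leaves c}. bas (graft c s d))"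

definition lie_br :: "vec \<Rightarrow> vec \<Rightarrow> vec" where
  "lie_br x y = (\<Sum>c\<in>supp x. \<Sum>d\<in>supp y. vscale (x c * y d) (br_basis c d))"

definition derived :: "vec set" where
  "derived = module.span vscale {lie_br x y | x y. x \<in> Lambda1 \<and> y \<in> Lambda1}"

end

theory Submission
  imports Defs
begin

text \<open>The coefficient of the right comb is a linear functional that vanishes on the derived
  subalgebra. Grafting a tree with at least two leaves onto a leaf of another tree yields a
  right comb exactly when both trees are right combs and the grafting happens at the last
  leaf. Hence for trees c, d with at least two leaves the right comb occurs exactly once in
  the sum of all d \<circ>_t c iff it occurs exactly once in the sum of all c \<circ>_s d, and the two
  contributions to [c, d] cancel. The right comb itself lies in Q Tree_2((m+1)) but not in the
  derived subalgebra.\<close>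

fun right_comb :: "nat \<Rightarrow> btree" where
  "right_comb 0 = BLeaf"
| "right_comb (Suc n) = BNode BLeaf (right_comb n)"

fun is_right_comb :: "btree \<Rightarrow> bool" where
  "is_right_comb BLeaf = True"
| "is_right_comb (BNode l r) = (l = BLeaf \<and> is_right_comb r)"

lemma leaves_ge_1: "1 \<le> leaves t"
  by (induction t) auto

lemma leaves_right_comb [simp]: "leaves (right_comb n) = n + 1"
  by (induction n) auto

lemma is_right_comb_right_comb [simp]: "is_right_comb (right_comb n)"
  by (induction n) auto

lemma is_right_comb_imp_eq: "is_right_comb t \<Longrightarrow> t = right_comb (leaves t - 1)"
proof (induction t)
  case (BNode l r)
  then show ?case using leaves_ge_1[of r] by (cases "leaves r") auto
qed auto

lemma leaves_graft:
  "1 \<le> t \<Longrightarrow> t \<le> leaves d \<Longrightarrow> leaves (graft d t c) = leaves d + leaves c - 1"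
  by (induction d arbitrary: t) (auto simp: leaves_ge_1)

lemma graft_neq_BLeaf: "c \<noteq> BLeaf \<Longrightarrow> 1 \<le> t \<Longrightarrow> t \<le> leaves d \<Longrightarrow> graft d t c \<noteq> BLeaf"
  by (induction d arbitrary: t) auto

lemma is_right_comb_graft:
  assumes "c \<noteq> BLeaf" "1 \<le> t" "t \<le> leaves d"
  shows "is_right_comb (graft d t c) \<longleftrightarrow> is_right_comb d \<and> is_right_comb c \<and> t = leaves d"
  using assms
proof (induction d arbitrary: t)
  case (BNode l r)
  show ?case
  proof (cases "t \<le> leaves l")
    case True
    then show ?thesis
      using BNode.prems graft_neq_BLeaf[of c t l] leaves_ge_1[of r] by auto
  next
    case False
    then show ?thesis using BNode by auto
  qed
qed auto

lemma graft_eq_right_comb_iff: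
  assumes "c \<noteq> BLeaf" "1 \<le> t" "t \<le> leaves d"
  shows "graft d t c = right_comb n \<longleftrightarrow>
    is_right_comb d \<and> is_right_comb c \<and> t = leaves d \<and> leaves d + leaves c = n + 2"
proof -
  have leaves_eq: "leaves (graft d t c) = leaves d + leaves c - 1"
    using assms(2,3) by (rule leaves_graft)
  have "1 \<le> leaves c" by (rule leaves_ge_1)
  show ?thesis
  proof
    assume comb: "graft d t c = right_comb n"
    then have "leaves d + leaves c - 1 = n + 1" using leaves_eq by simp
    then have "leaves d + leaves c = n + 2" using \<open>1 \<le> leaves c\<close> by linarith
    then show "is_right_comb d \<and> is_right_comb c \<and> t = leaves d \<and> leaves d + leaves c = n + 2"
      using is_right_comb_graft[OF assms] comb by simp
  next
    assume conds: "is_right_comb d \<and> is_right_comb c \<and> t = leaves d \<and> leaves d + leaves c = n + 2"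
    then have "is_right_comb (graft d t c)" using is_right_comb_graft[OF assms] by simp
    then show "graft d t c = right_comb n"
      using is_right_comb_imp_eq leaves_eq conds by fastforce
  qed
qed

lemma sum_fun_apply: "(\<Sum>a\<in>A. (f a :: 'b \<Rightarrow> 'c::comm_monoid_add)) x = (\<Sum>a\<in>A. f a x)"
  by (induction A rule: infinite_finite_induct) auto

lemma graftings_coeff_right_comb:
  assumes "c \<noteq> BLeaf"
  shows "(\<Sum>t\<in>{1..leaves d}. bas (graft d t c)) (right_comb n) =
    (if is_right_comb d \<and> is_right_comb c \<and> leaves d + leaves c = n + 2 then 1 else 0)"
proof -
  have "(\<Sum>t\<in>{1..leaves d}. bas (graft d t c)) (right_comb n) =
      (\<Sum>t\<in>{1..leaves d}. if t = leaves d \<and>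
         (is_right_comb d \<and> is_right_comb c \<and> leaves d + leaves c = n + 2) then 1 else 0)"
    unfolding sum_fun_apply bas_def
  proof (rule sum.cong [OF refl])
    fix t assume "t \<in> {1..leaves d}"
    then show "(if right_comb n = graft d t c then 1 else 0) = (if t = leaves d \<and>
         (is_right_comb d \<and> is_right_comb c \<and> leaves d + leaves c = n + 2) then (1::rat) else 0)"
      using graft_eq_right_comb_iff[OF assms, of t d n] by (auto simp: eq_commute[of "right_comb n"])
  qed
  then show ?thesis
    using leaves_ge_1[of d] by (cases "is_right_comb d \<and> is_right_comb c \<and> leaves d + leaves c = n + 2") auto
qed

lemma br_basis_right_comb:
  assumes "c \<noteq> BLeaf" "d \<noteq> BLeaf"
  shows "br_basis c d (right_comb n) = 0"
  unfolding br_basis_def fun_diff_def graftings_coeff_right_comb[OF assms(1)]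
    graftings_coeff_right_comb[OF assms(2)]
  by (simp add: add.commute conj_commute)

lemma lie_br_right_comb:
  assumes "x \<in> Lambda1" "y \<in> Lambda1"
  shows "lie_br x y (right_comb n) = 0"
proof -
  have "lie_br x y (right_comb n) =
      (\<Sum>c\<in>supp x. \<Sum>d\<in>supp y. x c * y d * br_basis c d (right_comb n))"
    unfolding lie_br_def sum_fun_apply vscale_def by simp
  also have "\<dots> = 0"
  proof (intro sum.neutral ballI)
    fix c d assume "c \<in> supp x" "d \<in> supp y"
    then have "c \<noteq> BLeaf" "d \<noteq> BLeaf" using assms unfolding Lambda1_def by fastforce+
    then show "x c * y d * br_basis c d (right_comb n) = 0" by (simp add: br_basis_right_comb)
  qed
  finally show ?thesis .
qed

interpretation vec: module vscale
  by unfold_locales (auto simp: vscale_def algebra_simps fun_eq_iff)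

lemma derived_right_comb: "f \<in> derived \<Longrightarrow> f (right_comb n) = 0"
proof -
  have "derived \<subseteq> {f. f (right_comb n) = 0}"
    unfolding derived_def
  proof (rule vec.span_minimal)
    show "{lie_br x y |x y. x \<in> Lambda1 \<and> y \<in> Lambda1} \<subseteq> {f. f (right_comb n) = 0}"
      using lie_br_right_comb by auto
    show "vec.subspace {f. f (right_comb n) = 0}"
      by (auto simp: vec.subspace_def vscale_def)
  qed
  then show "f \<in> derived \<Longrightarrow> f (right_comb n) = 0" by auto
qed

lemma bas_right_comb_in_QTree: "bas (right_comb m) \<in> QTree (m + 1)"
proof -
  have "supp (bas (right_comb m)) = {right_comb m}" by (auto simp: supp_def bas_def)
  then show ?thesis by (simp add: QTree_def)
qed

theorem lemma5p2:
  fixes m :: nat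
  assumes "2 \<le> m"
  shows "\<not> (QTree (m + 1) \<subseteq> derived)"
proof
  assume "QTree (m + 1) \<subseteq> derived"
  then have "bas (right_comb m) \<in> derived" using bas_right_comb_in_QTree by blast
  then have "bas (right_comb m) (right_comb m) = 0" by (rule derived_right_comb)
  then show False by (simp add: bas_def)
qed

end
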